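(* Let $k\ge 3$ be an integer. Then the $(6k^2-6k-1)$-fan $F_{6k^2-6k-1}$ satisfies $\mathrm{ecrw}(F_{6k^2-6k-1})\ge k$.
   Context: The $n$-fan $F_n$ is the graph obtained from the path on $n$ vertices by adding one new vertex adjacent to all vertices of the path. A tree-cut decomposition of a graph $G$ is a pair $\mathcal{T}=(T,\{X_t\}_{t\in V(T)})$ where $T$ is a tree and the bags $X_t\subseteq V(G)$ are pairwise disjoint (possibly empty) with $\bigcup_{t\in V(T)}X_t=V(G)$. For a node $t$ of $T$, let $T_1,\dots,T_m$ be the connected components of $T-t$ and $Z_i=\bigcup_{s\in V(T_i)}X_s$; $\mathrm{cross}_{\mathcal{T}}(t)$ is the number of edges of $G$ whose two endpoints lie in two distinct sets among $Z_1,\dots,Z_m$ (if $T$ has one node, $\mathrm{cross}_{\mathcal T}(t)=0$). The crossing number of $\mathcal{T}$ is $\max_{t}\mathrm{cross}_{\mathcal{T}}(t)$, and the thickness of $\mathcal{T}$ is $\max_t|X_t|$. The edge-crossing width of $\mathcal T$ is the maximum of its crossing number and its thickness, and $\mathrm{ecrw}(G)$ is the minimum edge-crossing width over all tree-cut decompositions of $G$. *)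

theory Defs
  imports Main
begin

text \<open>Graphs are pairs (V, E) with E a set of 2-element subsets of V.\<close>

definition fan :: "nat \<Rightarrow> nat set \<times> nat set set" where
  "fan n = ({0..n},
            {{i, Suc i} | i. 1 \<le> i \<and> i < n} \<union> {{0, i} | i. 1 \<le> i \<and> i \<le> n})"

definition adj_rel :: "'b set set \<Rightarrow> ('b \<times> 'b) set" where
  "adj_rel ET = {(x, y). {x, y} \<in> ET \<and> x \<noteq> y}"

definition connected_on :: "'b set \<Rightarrow> 'b set set \<Rightarrow> bool" where
  "connected_on N ET = (\<forall>x\<in>N. \<forall>y\<in>N. (x, y) \<in> (adj_rel ET)\<^sup>*)"

text \<open>A (finite) tree: nonempty, connected, and acyclic (no edge lies on a cycle,
  i.e. deleting any edge disconnects it).\<close>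
definition is_tree :: "'b set \<Rightarrow> 'b set set \<Rightarrow> bool" where
  "is_tree N ET =
     (finite N \<and> N \<noteq> {} \<and>
      (\<forall>e\<in>ET. \<exists>x y. e = {x, y} \<and> x \<noteq> y \<and> x \<in> N \<and> y \<in> N) \<and>
      connected_on N ET \<and>
      (\<forall>e\<in>ET. \<not> connected_on N (ET - {e})))"

definition same_comp :: "'b set \<Rightarrow> 'b set set \<Rightarrow> 'b \<Rightarrow> 'b \<Rightarrow> 'b \<Rightarrow> bool" where
  "same_comp N ET t s s' =
     (s \<in> N - {t} \<and> s' \<in> N - {t} \<and> (s, s') \<in> (adj_rel {e \<in> ET. t \<notin> e})\<^sup>*)"

definition is_tcd :: "'a set \<times> 'a set set \<Rightarrow> 'b set \<Rightarrow> 'b set set \<Rightarrow> ('b \<Rightarrow> 'a set) \<Rightarrow> bool" where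
  "is_tcd G N ET X =
     (is_tree N ET \<and> (\<forall>t\<in>N. X t \<subseteq> fst G) \<and>
      (\<forall>t\<in>N. \<forall>t'\<in>N. t \<noteq> t' \<longrightarrow> X t \<inter> X t' = {}) \<and>
      (\<Union>t\<in>N. X t) = fst G)"

definition cross :: "'a set \<times> 'a set set \<Rightarrow> 'b set \<Rightarrow> 'b set set \<Rightarrow> ('b \<Rightarrow> 'a set) \<Rightarrow> 'b \<Rightarrow> nat" where
  "cross G N ET X t =
     card {e \<in> snd G. \<exists>u v s s'. e = {u, v} \<and> s \<in> N - {t} \<and> s' \<in> N - {t} \<and>
                        u \<in> X s \<and> v \<in> X s' \<and> \<not> same_comp N ET t s s'}"

definition ec_width :: "'a set \<times> 'a set set \<Rightarrow> 'b set \<Rightarrow> 'b set set \<Rightarrow> ('b \<Rightarrow> 'a set) \<Rightarrow> nat" where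
  "ec_width G N ET X = Max ((\<lambda>t. max (cross G N ET X t) (card (X t))) ` N)"

text \<open>Edge-crossing width; tree nodes are taken to be natural numbers (any finite tree
  can be relabelled).\<close>
definition ecrw :: "'a set \<times> 'a set set \<Rightarrow> nat" where
  "ecrw G = Inf {w. \<exists>(N :: nat set) ET X. is_tcd G N ET X \<and> w = ec_width G N ET X}"

end

theory Submission
  imports Defs
begin

text \<open>Suppose a tree-cut decomposition of the fan has thickness and crossing number below k,
  and let r be the node whose bag holds the hub 0. If c is the neighbour of r towards a branch
  of T - r, every path vertex of that branch outside X c is separated from the hub by c, so its
  hub edge crosses at c; hence a branch holds at most 2k - 2 path vertices. A segment of 2k - 1
  consecutive path vertices that avoids X r and has no path edge crossing at r stays inside one
  branch, so every such segment is marked by a vertex of X r - {0} or by an edge crossing at r.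
  There are at most 2k - 3 marks, so the path has fewer than (2k - 2)(2k - 1) vertices, which
  is less than 6k^2 - 6k - 1.\<close>

lemma adj_rel_sym: "sym (adj_rel E)"
  unfolding adj_rel_def by (auto intro!: symI simp: insert_commute)

lemma rtrancl_adj_rel_sym: "(x, y) \<in> (adj_rel E)\<^sup>* \<Longrightarrow> (y, x) \<in> (adj_rel E)\<^sup>*"
  by (rule symD[OF sym_rtrancl[OF adj_rel_sym]])

lemma rtrancl_adj_rel_mono: "E \<subseteq> F \<Longrightarrow> (x, y) \<in> (adj_rel E)\<^sup>* \<Longrightarrow> (x, y) \<in> (adj_rel F)\<^sup>*"
  using rtrancl_mono[of "adj_rel E" "adj_rel F"] unfolding adj_rel_def by blast

lemma rtrancl_adj_rel_remove_edge:
  assumes "(x, y) \<in> (adj_rel (E - {{x, y}}))\<^sup>*"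
  shows "(adj_rel E)\<^sup>* \<subseteq> (adj_rel (E - {{x, y}}))\<^sup>*"
proof (rule rtrancl_subset_rtrancl, rule subrelI)
  fix u v assume "(u, v) \<in> adj_rel E"
  then have uv: "{u, v} \<in> E" "u \<noteq> v" unfolding adj_rel_def by auto
  show "(u, v) \<in> (adj_rel (E - {{x, y}}))\<^sup>*"
  proof (cases "{u, v} = {x, y}")
    case True
    then have "(u = x \<and> v = y) \<or> (u = y \<and> v = x)" by (auto simp: doubleton_eq_iff)
    then show ?thesis by (elim disjE conjE) (simp_all add: assms rtrancl_adj_rel_sym[OF assms])
  next
    case False
    then show ?thesis using uv unfolding adj_rel_def by auto
  qed
qed

lemma tree_edge_disconnects:
  assumes "is_tree N ET" "{x, y} \<in> ET"
  shows "(x, y) \<notin> (adj_rel (ET - {{x, y}}))\<^sup>*"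
proof
  assume "(x, y) \<in> (adj_rel (ET - {{x, y}}))\<^sup>*"
  from rtrancl_adj_rel_remove_edge[OF this] have "connected_on N (ET - {{x, y}})"
    using assms(1) unfolding is_tree_def connected_on_def by blast
  with assms show False unfolding is_tree_def by blast
qed

lemma rtrancl_adj_rel_first_edge:
  assumes "(r, z) \<in> (adj_rel ET)\<^sup>*" "z \<noteq> r"
  shows "\<exists>c. {r, c} \<in> ET \<and> c \<noteq> r \<and> (c, z) \<in> (adj_rel {e \<in> ET. r \<notin> e})\<^sup>*"
  using assms
proof (induction rule: rtrancl_induct)
  case base
  then show ?case by simp
next
  case (step y z)
  then have yz: "{y, z} \<in> ET" "y \<noteq> z" unfolding adj_rel_def by auto
  show ?case
  proof (cases "y = r")
    case True
    then show ?thesis using yz by auto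
  next
    case False
    with step.IH obtain c where c: "{r, c} \<in> ET" "c \<noteq> r" "(c, y) \<in> (adj_rel {e \<in> ET. r \<notin> e})\<^sup>*"
      by auto
    have "(y, z) \<in> adj_rel {e \<in> ET. r \<notin> e}" using yz False step.prems unfolding adj_rel_def by auto
    with c show ?thesis by (meson rtrancl.rtrancl_into_rtrancl)
  qed
qed

lemma same_comp_refl: "s \<in> N - {t} \<Longrightarrow> same_comp N ET t s s"
  unfolding same_comp_def by auto

lemma same_comp_trans:
  "same_comp N ET t s s' \<Longrightarrow> same_comp N ET t s' s'' \<Longrightarrow> same_comp N ET t s s''"
  unfolding same_comp_def using rtrancl_trans[of s s' _ s''] by simp

lemma tree_neighbour_towards:
  assumes "is_tree N ET" "r \<in> N" "s \<in> N - {r}"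
  obtains c where "{r, c} \<in> ET" "same_comp N ET r c s"
proof -
  have "(r, s) \<in> (adj_rel ET)\<^sup>*" using assms unfolding is_tree_def connected_on_def by blast
  then have "\<exists>c. {r, c} \<in> ET \<and> c \<noteq> r \<and> (c, s) \<in> (adj_rel {e \<in> ET. r \<notin> e})\<^sup>*"
    by (rule rtrancl_adj_rel_first_edge) (use assms(3) in simp)
  then obtain c where c: "{r, c} \<in> ET" "c \<noteq> r" "(c, s) \<in> (adj_rel {e \<in> ET. r \<notin> e})\<^sup>*"
    by blast
  obtain x y where "{r, c} = {x, y}" "x \<in> N" "y \<in> N"
    using assms(1) c(1) unfolding is_tree_def by blast
  then have "c \<in> N" by (auto simp: doubleton_eq_iff)
  then show ?thesis using that c assms(3) unfolding same_comp_def by blast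
qed

lemma same_comp_across_tree_edge:
  assumes "is_tree N ET" "{r, c} \<in> ET" "same_comp N ET r c s"
  shows "\<not> same_comp N ET c s r"
proof
  assume "same_comp N ET c s r"
  let ?E = "ET - {{r, c}}"
  have "(c, s) \<in> (adj_rel ?E)\<^sup>*"
    using assms(3) rtrancl_adj_rel_mono[of "{e \<in> ET. r \<notin> e}" ?E] unfolding same_comp_def by blast
  moreover have "(s, r) \<in> (adj_rel ?E)\<^sup>*"
    using \<open>same_comp N ET c s r\<close> rtrancl_adj_rel_mono[of "{e \<in> ET. c \<notin> e}" ?E]
    unfolding same_comp_def by blast
  ultimately have "(r, c) \<in> (adj_rel ?E)\<^sup>*" by (meson rtrancl_trans rtrancl_adj_rel_sym)
  with tree_edge_disconnects[OF assms(1,2)] show False by contradiction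
qed

definition crossing_at :: "'b set \<Rightarrow> 'b set set \<Rightarrow> ('b \<Rightarrow> 'a set) \<Rightarrow> 'b \<Rightarrow> 'a \<Rightarrow> 'a \<Rightarrow> bool" where
  "crossing_at N ET X t u v \<longleftrightarrow>
     (\<exists>s s'. s \<in> N - {t} \<and> s' \<in> N - {t} \<and> u \<in> X s \<and> v \<in> X s' \<and> \<not> same_comp N ET t s s')"

lemma card_le_cross:
  assumes "finite (snd G)" "F \<subseteq> snd G" "\<And>e. e \<in> F \<Longrightarrow> \<exists>u v. e = {u, v} \<and> crossing_at N ET X t u v"
  shows "card F \<le> cross G N ET X t"
proof -
  have "F \<subseteq> {e \<in> snd G. \<exists>u v. e = {u, v} \<and> crossing_at N ET X t u v}" using assms(2,3) by blast
  then have "card F \<le> card {e \<in> snd G. \<exists>u v. e = {u, v} \<and> crossing_at N ET X t u v}"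
    using assms(1) by (intro card_mono) auto
  also have "\<dots> = cross G N ET X t" unfolding cross_def crossing_at_def by simp
  finally show ?thesis .
qed

lemma is_tcd_single_bag: "is_tcd G {0::nat} {} (\<lambda>_. fst G)"
  unfolding is_tcd_def is_tree_def connected_on_def by auto

lemma ecrw_lower_bound:
  assumes "\<And>(N :: nat set) ET X. is_tcd G N ET X \<Longrightarrow> \<exists>t\<in>N. k \<le> max (cross G N ET X t) (card (X t))"
  shows "k \<le> ecrw G"
  unfolding ecrw_def
proof (rule cInf_greatest)
  show "{w. \<exists>(N :: nat set) ET X. is_tcd G N ET X \<and> w = ec_width G N ET X} \<noteq> {}"
    using is_tcd_single_bag by blast
next
  fix w assume "w \<in> {w. \<exists>(N :: nat set) ET X. is_tcd G N ET X \<and> w = ec_width G N ET X}"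
  then obtain N :: "nat set" and ET X where tcd: "is_tcd G N ET X" and w: "w = ec_width G N ET X"
    by blast
  obtain t where "t \<in> N" "k \<le> max (cross G N ET X t) (card (X t))" using assms[OF tcd] by blast
  moreover have "finite N" using tcd unfolding is_tcd_def is_tree_def by blast
  ultimately show "k \<le> w" unfolding w ec_width_def by (meson Max_ge finite_imageI imageI order_trans)
qed

lemma fan_path_edge: "1 \<le> i \<Longrightarrow> i < n \<Longrightarrow> {i, Suc i} \<in> snd (fan n)"
  unfolding fan_def by auto

lemma fan_hub_edge: "1 \<le> i \<Longrightarrow> i \<le> n \<Longrightarrow> {0, i} \<in> snd (fan n)"
  unfolding fan_def by auto

lemma finite_fan_edges: "finite (snd (fan n))"
proof (rule finite_subset)
  show "snd (fan n) \<subseteq> Pow {0..n}" unfolding fan_def by auto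
qed simp

lemma card_ge_if_meets_blocks:
  fixes S :: "nat set"
  assumes "finite S" "\<And>j. j < m \<Longrightarrow> \<exists>v\<in>S. a + j * p \<le> v \<and> v < a + j * p + p"
  shows "m \<le> card S"
proof -
  have "{..<m} \<subseteq> (\<lambda>v. (v - a) div p) ` S"
  proof
    fix j assume "j \<in> {..<m}"
    then obtain v where v: "v \<in> S" "a + j * p \<le> v" "v < a + j * p + p" using assms(2) by blast
    then have "j * p \<le> v - a" "v - a < j * p + p" by linarith+
    then have "(v - a) div p = j" by (intro div_nat_eqI) (simp_all add: mult.commute)
    with v(1) show "j \<in> (\<lambda>v. (v - a) div p) ` S" by force
  qed
  then have "card {..<m} \<le> card ((\<lambda>v. (v - a) div p) ` S)"
    by (rule card_mono[OF finite_imageI[OF assms(1)]])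
  then have "m \<le> card ((\<lambda>v. (v - a) div p) ` S)" by simp
  also have "\<dots> \<le> card S" by (rule card_image_le[OF assms(1)])
  finally show ?thesis .
qed

locale narrow_fan_tcd =
  fixes n k :: nat and N :: "'b set" and ET :: "'b set set" and X :: "'b \<Rightarrow> nat set"
  assumes tcd: "is_tcd (fan n) N ET X"
    and thin: "t \<in> N \<Longrightarrow> card (X t) < k"
    and few_crossings: "t \<in> N \<Longrightarrow> cross (fan n) N ET X t < k"
begin

lemma tree: "is_tree N ET"
  using tcd unfolding is_tcd_def by blast

lemma finite_bag: "t \<in> N \<Longrightarrow> finite (X t)"
  using tcd unfolding is_tcd_def fan_def by (auto intro: finite_subset)

definition home :: "nat \<Rightarrow> 'b" where
  "home v = (SOME t. t \<in> N \<and> v \<in> X t)"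

lemma home: "v \<le> n \<Longrightarrow> home v \<in> N \<and> v \<in> X (home v)"
  unfolding home_def by (rule someI_ex) (use tcd in \<open>auto simp: is_tcd_def fan_def\<close>)

definition hub_node :: 'b where
  "hub_node = home 0"

lemma hub_node: "hub_node \<in> N" "0 \<in> X hub_node"
  unfolding hub_node_def using home[of 0] by auto

definition far_vertices :: "'b \<Rightarrow> nat set" where
  "far_vertices t = {v \<in> {1..n}. \<exists>s \<in> N - {t}. v \<in> X s \<and> \<not> same_comp N ET t s hub_node}"

lemma card_far_vertices:
  assumes "t \<in> N" "t \<noteq> hub_node"
  shows "card (far_vertices t) < k"
proof -
  have "card (far_vertices t) = card ((\<lambda>v. {0, v}) ` far_vertices t)"
    by (rule card_image[symmetric]) (auto simp: inj_on_def doubleton_eq_iff far_vertices_def)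
  also have "\<dots> \<le> cross (fan n) N ET X t"
  proof (rule card_le_cross[OF finite_fan_edges])
    show "(\<lambda>v. {0, v}) ` far_vertices t \<subseteq> snd (fan n)"
      using fan_hub_edge by (auto simp: far_vertices_def)
    fix e assume "e \<in> (\<lambda>v. {0, v}) ` far_vertices t"
    then obtain v where "e = {v, 0}" "v \<in> far_vertices t" by (auto simp: insert_commute)
    then show "\<exists>u v. e = {u, v} \<and> crossing_at N ET X t u v"
      using hub_node assms(2) unfolding far_vertices_def crossing_at_def by blast
  qed
  also have "\<dots> < k" by (rule few_crossings[OF assms(1)])
  finally show ?thesis .
qed

lemma segment_same_comp:
  assumes "b \<le> n + 1"
    and avoid: "\<And>v. v \<in> {a..<b} \<Longrightarrow> v \<notin> X hub_node"
    and uncrossed: "\<And>i. a \<le> i \<Longrightarrow> Suc i < b \<Longrightarrow> \<not> crossing_at N ET X hub_node i (Suc i)"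
    and "v \<in> {a..<b}"
  shows "same_comp N ET hub_node (home a) (home v)"
proof -
  have home_off_hub: "home w \<in> N - {hub_node} \<and> w \<in> X (home w)" if "w \<in> {a..<b}" for w
    using home[of w] avoid[OF that] that assms(1) by auto
  obtain d where "v = a + d" "a + d < b" using assms(4) le_Suc_ex by fastforce
  then show ?thesis
  proof (induction d arbitrary: v)
    case 0
    then show ?case using same_comp_refl[of "home a"] home_off_hub[of a] by simp
  next
    case (Suc d)
    have "same_comp N ET hub_node (home (a + d)) (home (Suc (a + d)))"
      using uncrossed[of "a + d"] home_off_hub[of "a + d"] home_off_hub[of "Suc (a + d)"] Suc.prems
      unfolding crossing_at_def by auto
    with Suc show ?case using same_comp_trans by fastforce
  qed
qed

definition hub_marks :: "nat set" where
  "hub_marks = (X hub_node - {0}) \<union> {i. 1 \<le> i \<and> i < n \<and> crossing_at N ET X hub_node i (Suc i)}"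

lemma long_segment_marked:
  assumes "1 \<le> a" "a + (2 * k - 1) \<le> n + 1"
  shows "\<exists>v \<in> hub_marks. a \<le> v \<and> v < a + (2 * k - 1)"
proof (rule ccontr)
  assume unmarked: "\<not> ?thesis"
  define W where "W = {a..<a + (2 * k - 1)}"
  have avoid: "v \<notin> X hub_node" if "v \<in> W" for v
    using unmarked that assms(1) unfolding W_def hub_marks_def by auto
  have uncrossed: "\<not> crossing_at N ET X hub_node i (Suc i)"
    if "a \<le> i" "Suc i < a + (2 * k - 1)" for i
    using unmarked that assms unfolding hub_marks_def by auto
  have W_ne: "a \<in> W" using thin[OF hub_node(1)] unfolding W_def by simp
  have same: "same_comp N ET hub_node (home a) (home v)" if "v \<in> W" for v
    using segment_same_comp[OF assms(2)] avoid uncrossed that unfolding W_def by blast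
  have "home a \<in> N - {hub_node}" using same[OF W_ne] unfolding same_comp_def by blast
  then obtain c where c: "{hub_node, c} \<in> ET" "same_comp N ET hub_node c (home a)"
    using tree_neighbour_towards[OF tree hub_node(1)] by blast
  then have c_N: "c \<in> N - {hub_node}" unfolding same_comp_def by blast
  have "W \<subseteq> X c \<union> far_vertices c"
  proof
    fix v assume v: "v \<in> W"
    then have v_home: "home v \<in> N \<and> v \<in> X (home v)" and "v \<in> {1..n}"
      using home[of v] assms unfolding W_def by auto
    have "same_comp N ET hub_node c (home v)" using same_comp_trans[OF c(2) same[OF v]] .
    then have "home v \<noteq> c \<Longrightarrow> \<not> same_comp N ET c (home v) hub_node"
      using same_comp_across_tree_edge[OF tree c(1)] by blast
    with v_home \<open>v \<in> {1..n}\<close> show "v \<in> X c \<union> far_vertices c"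
      unfolding far_vertices_def by (cases "home v = c") auto
  qed
  moreover have "finite (X c \<union> far_vertices c)"
    using finite_bag c_N unfolding far_vertices_def by simp
  ultimately have "card W \<le> card (X c \<union> far_vertices c)" by (rule card_mono[rotated])
  also have "\<dots> \<le> card (X c) + card (far_vertices c)" by (rule card_Un_le)
  also have "\<dots> < 2 * k - 1"
    using thin[of c] card_far_vertices[of c] c_N by simp
  finally show False unfolding W_def by simp
qed

lemma card_hub_marks: "card hub_marks + 3 \<le> 2 * k"
proof -
  let ?I = "{i. 1 \<le> i \<and> i < n \<and> crossing_at N ET X hub_node i (Suc i)}"
  have "card (X hub_node) > 0" using hub_node finite_bag[OF hub_node(1)] card_gt_0_iff by blast
  then have "card (X hub_node - {0}) + 2 \<le> k"
    using thin[OF hub_node(1)] hub_node(2) by simp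
  moreover have "card ?I < k"
  proof -
    have "card ?I = card ((\<lambda>i. {i, Suc i}) ` ?I)"
      by (rule card_image[symmetric]) (auto simp: inj_on_def doubleton_eq_iff)
    also have "\<dots> \<le> cross (fan n) N ET X hub_node"
      by (rule card_le_cross[OF finite_fan_edges]) (auto intro: fan_path_edge)
    also have "\<dots> < k" by (rule few_crossings[OF hub_node(1)])
    finally show ?thesis .
  qed
  moreover have "card hub_marks \<le> card (X hub_node - {0}) + card ?I"
    unfolding hub_marks_def by (rule card_Un_le)
  ultimately show ?thesis by linarith
qed

theorem fan_size_bound: "n < (2 * k - 2) * (2 * k - 1)"
proof (rule ccontr)
  assume "\<not> n < (2 * k - 2) * (2 * k - 1)"
  define p where "p = 2 * k - 1"
  with \<open>\<not> n < _\<close> have long: "(2 * k - 2) * p \<le> n" by simp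
  have "2 * k - 2 \<le> card hub_marks"
  proof (rule card_ge_if_meets_blocks)
    show "finite hub_marks" unfolding hub_marks_def using finite_bag[OF hub_node(1)] by simp
    fix j assume "j < 2 * k - 2"
    then have "(j + 1) * p \<le> (2 * k - 2) * p" by (intro mult_le_mono1) simp
    with long have "1 + j * p + p \<le> n + 1" by simp
    then show "\<exists>v\<in>hub_marks. 1 + j * p \<le> v \<and> v < 1 + j * p + p"
      using long_segment_marked[of "1 + j * p"] unfolding p_def by simp
  qed
  with card_hub_marks show False by simp
qed

end

theorem lemma3p16:
  fixes k :: nat
  assumes "k \<ge> 3"
  shows "k \<le> ecrw (fan (6 * k^2 - 6 * k - 1))"
proof (rule ecrw_lower_bound, rule ccontr)
  fix N :: "nat set" and ET X
  assume "is_tcd (fan (6 * k^2 - 6 * k - 1)) N ET X"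
    and "\<not> (\<exists>t\<in>N. k \<le> max (cross (fan (6 * k^2 - 6 * k - 1)) N ET X t) (card (X t)))"
  then interpret narrow_fan_tcd "6 * k^2 - 6 * k - 1" k N ET X
    by unfold_locales auto
  obtain j where "k = j + 3" using assms by (metis le_iff_add add.commute)
  then have "(2 * k - 2) * (2 * k - 1) \<le> 6 * k^2 - 6 * k - 1"
    by (simp add: power2_eq_square algebra_simps)
  with fan_size_bound show False by simp
qed

end
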